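(* Let $\mathcal H$ be a Hilbert space, $K$ a compact operator on $\mathcal H$, and $W:D(W)\to\mathcal H$ a closed bijective operator with dense domain (so $W^{-1}$ is bounded and injective with dense range). Assume $W^{-1}KW$ (on $D(W)$) has a bounded closure $B$ which is compact. Then $\sigma(B)=\sigma(K)$. *)

theory Defs
  imports "HOL-Analysis.Analysis"
begin

class complex_vector = real_vector +
  fixes scaleC :: "complex \<Rightarrow> 'a \<Rightarrow> 'a" (infixr \<open>*\<^sub>C\<close> 75)
  assumes scaleC_add_right: "a *\<^sub>C (x + y) = a *\<^sub>C x + a *\<^sub>C y"
    and scaleC_add_left: "(a + b) *\<^sub>C x = a *\<^sub>C x + b *\<^sub>C x"
    and scaleC_scaleC: "a *\<^sub>C (b *\<^sub>C x) = (a * b) *\<^sub>C x"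
    and scaleC_one: "1 *\<^sub>C x = x"
    and scaleR_scaleC: "scaleR r x = complex_of_real r *\<^sub>C x"

class chilbert = complex_vector + banach +
  fixes cinner :: "'a \<Rightarrow> 'a \<Rightarrow> complex"
  assumes cinner_commute: "cinner x y = cnj (cinner y x)"
    and cinner_add_left: "cinner (x + y) z = cinner x z + cinner y z"
    and cinner_scaleC_left: "cinner (c *\<^sub>C x) y = cnj c * cinner x y"
    and cinner_real_nonneg: "Im (cinner x x) = 0 \<and> Re (cinner x x) \<ge> 0"
    and cinner_eq_zero_iff: "cinner x x = 0 \<longleftrightarrow> x = 0"
    and norm_eq_sqrt_cinner: "norm x = sqrt (Re (cinner x x))"

definition clinear :: "('a::complex_vector \<Rightarrow> 'b::complex_vector) \<Rightarrow> bool" where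
  "clinear f \<longleftrightarrow> (\<forall>x y. f (x + y) = f x + f y) \<and> (\<forall>c x. f (c *\<^sub>C x) = c *\<^sub>C f x)"

definition bounded_clinear :: "('a::chilbert \<Rightarrow> 'b::chilbert) \<Rightarrow> bool" where
  "bounded_clinear f \<longleftrightarrow> clinear f \<and> (\<exists>C. \<forall>x. norm (f x) \<le> norm x * C)"

definition compact_operator :: "('a::chilbert \<Rightarrow> 'b::chilbert) \<Rightarrow> bool" where
  "compact_operator f \<longleftrightarrow> bounded_clinear f \<and> compact (closure (f ` cball 0 1))"

definition op_spectrum :: "('a::chilbert \<Rightarrow> 'a) \<Rightarrow> complex set" where
  "op_spectrum T = {l. \<not> (\<exists>S. bounded_clinear S \<and>
       (\<forall>x. S (T x - l *\<^sub>C x) = x) \<and> (\<forall>y. T (S y) - l *\<^sub>C S y = y))}"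

definition csubspace :: "'a::complex_vector set \<Rightarrow> bool" where
  "csubspace D \<longleftrightarrow> 0 \<in> D \<and> (\<forall>x\<in>D. \<forall>y\<in>D. x + y \<in> D) \<and> (\<forall>c. \<forall>x\<in>D. c *\<^sub>C x \<in> D)"

definition clinear_on :: "'a::complex_vector set \<Rightarrow> ('a \<Rightarrow> 'b::complex_vector) \<Rightarrow> bool" where
  "clinear_on D f \<longleftrightarrow> csubspace D \<and> (\<forall>x\<in>D. \<forall>y\<in>D. f (x + y) = f x + f y) \<and>
     (\<forall>c. \<forall>x\<in>D. f (c *\<^sub>C x) = c *\<^sub>C f x)"

definition op_graph :: "'a set \<Rightarrow> ('a \<Rightarrow> 'b) \<Rightarrow> ('a \<times> 'b) set" where
  "op_graph D f = {(x, f x) | x. x \<in> D}"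

end

theory Submission
  imports Defs
begin

text \<open>
  Put \<open>V = W\<inverse>\<close>, an injective (possibly unbounded) linear map of the whole space onto
  the dense subspace \<open>D\<close>. Since the graph of \<open>W\<inverse>KW\<close> lies in the graph of \<open>B\<close>, we have
  \<open>B V = V K\<close> everywhere. Hence if \<open>K - \<lambda>\<close> is invertible, the range of \<open>B - \<lambda>\<close> contains
  \<open>D\<close> and is dense; and if \<open>B - \<lambda>\<close> is invertible, \<open>K - \<lambda>\<close> is injective. For a compact
  operator and \<open>\<lambda> \<noteq> 0\<close> either property already yields a bounded inverse (Riesz--Schauder
  theory: by Riesz's lemma, the kernels of \<open>(T - \<lambda>)\<^sup>n\<close> cannot increase strictly forever and
  their ranges cannot decrease strictly forever). For \<open>\<lambda> = 0\<close>, invertibility of a compact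
  operator forces the unit ball to be compact, and the same theory applies to \<open>T + id\<close> and
  \<open>\<lambda> = 1\<close>.
\<close>

lemma scaleC_zero_right [simp]: "c *\<^sub>C (0::'a::complex_vector) = 0"
  by (metis add_cancel_right_right scaleC_add_right add_0)

lemma scaleC_zero_left [simp]: "0 *\<^sub>C (x::'a::complex_vector) = 0"
  by (metis add_cancel_right_right scaleC_add_left add_0)

lemma scaleC_minus_right: "c *\<^sub>C (- (x::'a::complex_vector)) = - (c *\<^sub>C x)"
  by (metis eq_neg_iff_add_eq_0 scaleC_add_right scaleC_zero_right)

lemma scaleC_diff_right: "c *\<^sub>C ((x::'a::complex_vector) - y) = c *\<^sub>C x - c *\<^sub>C y"
  by (metis diff_conv_add_uminus scaleC_add_right scaleC_minus_right)

lemma scaleC_minus_left: "(- c) *\<^sub>C (x::'a::complex_vector) = - (c *\<^sub>C x)"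
  by (metis eq_neg_iff_add_eq_0 scaleC_add_left scaleC_zero_left)

lemma scaleC_minus1_left: "(- 1) *\<^sub>C (x::'a::complex_vector) = - x"
  by (simp add: scaleC_minus_left scaleC_one)

lemma cinner_scaleC_right: "cinner x (c *\<^sub>C y) = c * cinner x (y::'a::chilbert)"
  by (metis cinner_commute cinner_scaleC_left complex_cnj_cnj complex_cnj_mult)

lemma norm_scaleC: "norm (c *\<^sub>C (x::'a::chilbert)) = cmod c * norm x"
proof -
  have "cinner (c *\<^sub>C x) (c *\<^sub>C x) = (cnj c * c) * cinner x x"
    by (simp add: cinner_scaleC_left cinner_scaleC_right)
  also have "cnj c * c = complex_of_real ((cmod c)\<^sup>2)"
    by (metis complex_norm_square mult.commute)
  finally have "Re (cinner (c *\<^sub>C x) (c *\<^sub>C x)) = (cmod c)\<^sup>2 * Re (cinner x x)"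
    by simp
  then show ?thesis
    by (simp add: norm_eq_sqrt_cinner real_sqrt_mult)
qed

lemma bounded_linear_scaleC: "bounded_linear (\<lambda>x::'a::chilbert. c *\<^sub>C x)"
  by (rule bounded_linear_intro[where K="cmod c"])
     (auto simp: scaleC_add_right scaleR_scaleC scaleC_scaleC norm_scaleC mult.commute)

lemma clinear_imp_linear: "clinear f \<Longrightarrow> linear f"
  unfolding clinear_def by (intro linearI) (simp_all add: scaleR_scaleC)

lemma clinear_add: "clinear f \<Longrightarrow> f (x + y) = f x + f y"
  unfolding clinear_def by blast

lemma clinear_scaleC: "clinear f \<Longrightarrow> f (c *\<^sub>C x) = c *\<^sub>C f x"
  unfolding clinear_def by blast

lemma clinear_diff: "clinear f \<Longrightarrow> f (x - y) = f x - f y"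
  using clinear_imp_linear linear_diff by blast

lemma clinear_zero: "clinear f \<Longrightarrow> f 0 = 0"
  using clinear_imp_linear linear_0 by blast

lemma clinear_funpow: "clinear (f::'a::complex_vector \<Rightarrow> 'a) \<Longrightarrow> clinear (f ^^ n)"
proof (induction n)
  case (Suc n)
  then have "clinear (\<lambda>x. f ((f ^^ n) x))"
    using \<open>clinear f\<close> unfolding clinear_def by simp
  then show ?case
    by simp
qed (simp add: clinear_def)

lemma bounded_clinear_imp_bounded_linear:
  assumes "bounded_clinear f"
  shows "bounded_linear f"
proof -
  from assms obtain C where "clinear f" and "\<forall>x. norm (f x) \<le> norm x * C"
    unfolding bounded_clinear_def by blast
  then show ?thesis
    by (intro bounded_linear_intro[where K=C]) (simp_all add: clinear_def scaleR_scaleC)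
qed

lemma bounded_clinear_add_id:
  assumes "bounded_clinear (f::'a::chilbert \<Rightarrow> 'a)"
  shows "bounded_clinear (\<lambda>x. f x + x)"
proof -
  from assms obtain C where lin: "clinear f" and C: "\<forall>x. norm (f x) \<le> norm x * C"
    unfolding bounded_clinear_def by blast
  have "clinear (\<lambda>x. f x + x)"
    using lin unfolding clinear_def by (simp add: scaleC_add_right algebra_simps)
  moreover have "norm (f x + x) \<le> norm x * (C + 1)" for x
    using norm_triangle_ineq[of "f x" x] C[rule_format, of x] by (simp add: algebra_simps)
  ultimately show ?thesis
    unfolding bounded_clinear_def by blast
qed

lemma csubspace_zero: "csubspace M \<Longrightarrow> 0 \<in> M"
  unfolding csubspace_def by blast

lemma csubspace_add: "csubspace M \<Longrightarrow> a \<in> M \<Longrightarrow> b \<in> M \<Longrightarrow> a + b \<in> M"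
  unfolding csubspace_def by blast

lemma csubspace_scaleC: "csubspace M \<Longrightarrow> a \<in> M \<Longrightarrow> c *\<^sub>C a \<in> M"
  unfolding csubspace_def by blast

lemma csubspace_scaleR: "csubspace M \<Longrightarrow> a \<in> M \<Longrightarrow> r *\<^sub>R a \<in> M"
  by (simp add: csubspace_scaleC scaleR_scaleC)

lemma csubspace_diff: "csubspace M \<Longrightarrow> a \<in> M \<Longrightarrow> b \<in> M \<Longrightarrow> a - b \<in> M"
  by (metis csubspace_add csubspace_scaleC diff_conv_add_uminus scaleC_minus1_left)

lemma csubspace_kernel: "clinear f \<Longrightarrow> csubspace {x. f x = 0}"
  unfolding csubspace_def by (auto simp: clinear_zero clinear_def)

lemma csubspace_range:
  assumes f: "clinear f"
  shows "csubspace (range f)"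
  unfolding csubspace_def
proof (intro conjI ballI allI)
  show "0 \<in> range f"
    using clinear_zero[OF f] by (metis rangeI)
  fix a b c
  assume "a \<in> range f"
  then obtain x where a: "a = f x" by blast
  show "c *\<^sub>C a \<in> range f"
    unfolding a clinear_scaleC[OF f, symmetric] by (rule rangeI)
  assume "b \<in> range f"
  then obtain y where b: "b = f y" by blast
  show "a + b \<in> range f"
    unfolding a b clinear_add[OF f, symmetric] by (rule rangeI)
qed

section \<open>Riesz's lemma\<close>

lemma infdist_lessE:
  assumes "A \<noteq> {}" "infdist x A < e"
  obtains a where "a \<in> A" "dist x a < e"
  using assms by (metis infdist_notempty cINF_less_iff bdd_below_image_dist)

lemma csubspace_infdist_representative:
  fixes M :: "'a::chilbert set"
  assumes M: "csubspace M" and pos: "0 < infdist x M"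
  obtains u where "norm u < 2" "\<forall>v\<in>M. 1 \<le> norm (u - v)" "x - infdist x M *\<^sub>R u \<in> M"
proof -
  define d where "d = infdist x M"
  have "M \<noteq> {}"
    using csubspace_zero[OF M] by blast
  then obtain z where z: "z \<in> M" "dist x z < 2 * d"
    using infdist_lessE[of M x "2 * d"] pos unfolding d_def by auto
  define u where "u = (1 / d) *\<^sub>R (x - z)"
  have x_eq: "x - d *\<^sub>R u = z"
    using pos unfolding u_def d_def by simp
  have "norm u = norm (x - z) / d"
    using pos unfolding u_def d_def by simp
  then have "norm u < 2"
    using z(2) pos unfolding d_def by (simp add: dist_norm divide_less_eq)
  moreover have "1 \<le> norm (u - v)" if v: "v \<in> M" for v
  proof -
    have "d \<le> norm (x - (z + d *\<^sub>R v))"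
      using infdist_le[OF csubspace_add[OF M z(1) csubspace_scaleR[OF M v]], of x]
      unfolding d_def by (simp add: dist_norm)
    also have "x - (z + d *\<^sub>R v) = d *\<^sub>R (u - v)"
      using x_eq by (simp add: algebra_simps)
    finally show ?thesis
      using pos unfolding d_def by simp
  qed
  ultimately show thesis
    using that x_eq z(1) unfolding d_def by blast
qed

lemma riesz_lemma:
  fixes M N :: "'a::chilbert set"
  assumes M: "csubspace M" "closed M" and N: "csubspace N" and "M \<subset> N"
  obtains y where "y \<in> N" "norm y = 1" "\<forall>z\<in>M. 1/2 \<le> norm (y - z)"
proof -
  obtain x where x: "x \<in> N" "x \<notin> M"
    using \<open>M \<subset> N\<close> by blast
  have "0 < infdist x M"
    using infdist_pos_not_in_closed[OF M(2) _ x(2)] csubspace_zero[OF M(1)] by blast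
  then obtain u where u: "norm u < 2" "\<forall>v\<in>M. 1 \<le> norm (u - v)" "x - infdist x M *\<^sub>R u \<in> M"
    using csubspace_infdist_representative[OF M(1)] by blast
  have "1 \<le> norm u"
    using u(2) csubspace_zero[OF M(1)] by fastforce
  then have "u \<noteq> 0"
    by auto
  define y where "y = (1 / norm u) *\<^sub>R u"
  have "x - (x - infdist x M *\<^sub>R u) \<in> N"
    using csubspace_diff[OF N x(1)] u(3) \<open>M \<subset> N\<close> by blast
  then have "infdist x M *\<^sub>R u \<in> N"
    by simp
  then have "(1 / infdist x M) *\<^sub>R (infdist x M *\<^sub>R u) \<in> N"
    by (rule csubspace_scaleR[OF N])
  then have "u \<in> N"
    using \<open>0 < infdist x M\<close> by simp
  then have "y \<in> N"
    unfolding y_def by (rule csubspace_scaleR[OF N])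
  moreover have "norm y = 1"
    using \<open>u \<noteq> 0\<close> unfolding y_def by simp
  moreover have "1/2 \<le> norm (y - z)" if "z \<in> M" for z
  proof -
    have "1 \<le> norm (u - norm u *\<^sub>R z)"
      using u(2) csubspace_scaleR[OF M(1) \<open>z \<in> M\<close>] by blast
    also have "u - norm u *\<^sub>R z = norm u *\<^sub>R (y - z)"
      using \<open>u \<noteq> 0\<close> unfolding y_def by (simp add: algebra_simps)
    finally have "1 \<le> norm u * norm (y - z)"
      using \<open>1 \<le> norm u\<close> by simp
    then show ?thesis
      using u(1) mult_right_mono[of "norm u" 2 "norm (y - z)"] norm_ge_zero[of "y - z"] by linarith
  qed
  ultimately show thesis
    using that by blast
qed

section \<open>Riesz--Schauder theory\<close>

lemma compact_operator_subseq_convergent: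
  fixes f :: "'a::chilbert \<Rightarrow> 'b::chilbert" and x :: "nat \<Rightarrow> 'a"
  assumes f: "compact_operator f" and x: "\<And>n. norm (x n) \<le> M"
  obtains r l where "strict_mono r" "(\<lambda>n. f (x (r n))) \<longlonglongrightarrow> l"
proof -
  define M' where "M' = max M 1"
  have M': "M' > 0" "M' \<ge> M"
    unfolding M'_def by auto
  have lin: "f ((1 / M') *\<^sub>R v) = (1 / M') *\<^sub>R f v" for v
    using f bounded_clinear_imp_bounded_linear bounded_linear.linear linear_scale
    unfolding compact_operator_def by blast
  have "(1 / M') *\<^sub>R x n \<in> cball 0 1" for n
    using x[of n] M' by (simp add: field_simps)
  then have "f ((1 / M') *\<^sub>R x n) \<in> closure (f ` cball 0 1)" for n
    using closure_subset by blast
  then have in_closure: "\<forall>n. (1 / M') *\<^sub>R f (x n) \<in> closure (f ` cball 0 1)"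
    by (simp add: lin)
  have compact: "compact (closure (f ` cball 0 1))"
    using f unfolding compact_operator_def by blast
  obtain l r where r: "l \<in> closure (f ` cball 0 1)" "strict_mono r"
    "((\<lambda>n. (1 / M') *\<^sub>R f (x n)) \<circ> r) \<longlonglongrightarrow> l"
    by (rule seq_compactE[OF compact_imp_seq_compact[OF compact] in_closure])
  have "(\<lambda>n. M' *\<^sub>R ((1 / M') *\<^sub>R f (x (r n)))) \<longlonglongrightarrow> M' *\<^sub>R l"
    using r(3) unfolding o_def by (intro tendsto_intros)
  then show thesis
    using that[OF r(2)] M' by simp
qed

lemma compact_operator_if_compact_cball:
  fixes f :: "'a::chilbert \<Rightarrow> 'b::chilbert"
  assumes "compact (cball (0::'a) 1)" and "bounded_clinear f"
  shows "compact_operator f"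
proof -
  have "compact (f ` cball 0 1)"
    using assms by (intro compact_continuous_image linear_continuous_on bounded_clinear_imp_bounded_linear)
  then show ?thesis
    using assms(2) unfolding compact_operator_def by (simp add: compact_imp_closed)
qed

lemma compact_cball_if_compact_operator_left_invertible:
  fixes T S :: "'a::chilbert \<Rightarrow> 'a"
  assumes "compact_operator T" "continuous_on UNIV S" "\<And>x. S (T x) = x"
  shows "compact (cball (0::'a) 1)"
proof -
  have "compact (S ` closure (T ` cball 0 1))"
    using assms(1,2) unfolding compact_operator_def
    by (blast intro: compact_continuous_image continuous_on_subset)
  moreover have "cball 0 1 \<subseteq> S ` closure (T ` cball 0 1)"
    using assms(3) closure_subset by (metis image_mono image_comp comp_apply image_id subsetI image_subset_iff)
  ultimately have "compact (S ` closure (T ` cball 0 1) \<inter> cball 0 1)"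
    by (blast intro: compact_Int_closed)
  moreover have "S ` closure (T ` cball 0 1) \<inter> cball 0 1 = cball 0 1"
    using \<open>cball 0 1 \<subseteq> _\<close> by blast
  ultimately show ?thesis
    by simp
qed

locale compact_minus_scalar =
  fixes C :: "'a::chilbert \<Rightarrow> 'a" and \<mu> :: complex and T :: "'a \<Rightarrow> 'a"
  assumes compact_C: "compact_operator C"
    and nonzero: "\<mu> \<noteq> 0"
    and T_eq: "T x = C x - \<mu> *\<^sub>C x"
begin

lemma bounded_clinear_C: "bounded_clinear C"
  using compact_C unfolding compact_operator_def by blast

lemma clinear_T: "clinear T"
  using bounded_clinear_C
  unfolding bounded_clinear_def clinear_def T_eq by (simp add: scaleC_add_right scaleC_diff_right scaleC_scaleC mult.commute)

lemma bounded_linear_T: "bounded_linear T"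
proof -
  have "T = (\<lambda>x. C x - \<mu> *\<^sub>C x)"
    using T_eq by (simp add: fun_eq_iff)
  then show ?thesis
    using bounded_linear_sub[OF bounded_clinear_imp_bounded_linear[OF bounded_clinear_C] bounded_linear_scaleC]
    by simp
qed

lemma clinear_T_pow: "clinear (T ^^ n)"
  by (rule clinear_funpow[OF clinear_T])

lemma bounded_linear_T_pow: "bounded_linear (T ^^ n)"
  by (induction n) (auto intro: bounded_linear_compose[OF bounded_linear_T] bounded_linear_ident)

lemma continuous_T_pow: "continuous_on UNIV (T ^^ n)"
  by (rule linear_continuous_on[OF bounded_linear_T_pow])

lemma C_image_not_separated:
  fixes y :: "nat \<Rightarrow> 'a"
  assumes "\<And>n. norm (y n) \<le> 1" and "e > 0"
  obtains m n where "m \<noteq> n" "norm (C (y m) - C (y n)) < e"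
proof -
  obtain r l where r: "strict_mono r" "(\<lambda>n. C (y (r n))) \<longlonglongrightarrow> l"
    using compact_operator_subseq_convergent[OF compact_C] assms(1) by blast
  then obtain N where "\<forall>m\<ge>N. \<forall>n\<ge>N. dist (C (y (r m))) (C (y (r n))) < e"
    using LIMSEQ_imp_Cauchy metric_CauchyD \<open>e > 0\<close> by blast
  then have "norm (C (y (r N)) - C (y (r (Suc N)))) < e"
    by (simp add: dist_norm)
  moreover have "r N \<noteq> r (Suc N)"
    using strict_monoD[OF r(1), of N "Suc N"] by simp
  ultimately show thesis
    using that by blast
qed

text \<open>The key estimate: \<open>C y - C w = \<mu> (y - z)\<close> with \<open>z = w + \<mu>\<inverse> (T w - T y) \<in> M\<close>.\<close>
lemma C_diff_lower_bound:
  assumes M: "csubspace M" and w: "w \<in> M" "T w \<in> M" and "T y \<in> M"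
    and far: "\<forall>z\<in>M. 1/2 \<le> norm (y - z)"
  shows "cmod \<mu> / 2 \<le> norm (C y - C w)"
proof -
  define z where "z = w + inverse \<mu> *\<^sub>C (T w - T y)"
  have "z \<in> M"
    unfolding z_def using assms by (intro csubspace_add csubspace_scaleC csubspace_diff)
  have "\<mu> *\<^sub>C (y - z) = \<mu> *\<^sub>C y - \<mu> *\<^sub>C w - (\<mu> * inverse \<mu>) *\<^sub>C (T w - T y)"
    unfolding z_def by (simp add: scaleC_diff_right scaleC_add_right scaleC_scaleC)
  also have "\<dots> = C y - C w"
    using nonzero by (simp add: scaleC_one T_eq)
  finally have "C y - C w = \<mu> *\<^sub>C (y - z)"
    by simp
  moreover have "cmod \<mu> * (1/2) \<le> cmod \<mu> * norm (y - z)"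
    using far \<open>z \<in> M\<close> by (intro mult_left_mono) auto
  ultimately show ?thesis
    by (simp add: norm_scaleC)
qed

lemma bounded_preimage_subseq_limit:
  fixes u :: "nat \<Rightarrow> 'a"
  assumes u: "\<And>n. norm (u n) \<le> M" and Tu: "(\<lambda>n. T (u n)) \<longlonglongrightarrow> y"
  obtains r u0 where "strict_mono r" "(\<lambda>n. u (r n)) \<longlonglongrightarrow> u0" "T u0 = y"
proof -
  obtain r w where r: "strict_mono r" "(\<lambda>n. C (u (r n))) \<longlonglongrightarrow> w"
    using compact_operator_subseq_convergent[OF compact_C] u by blast
  have Tur: "(\<lambda>n. T (u (r n))) \<longlonglongrightarrow> y"
    using LIMSEQ_subseq_LIMSEQ[OF Tu r(1)] by (simp add: o_def)
  have "(\<lambda>n. C (u (r n)) - T (u (r n))) \<longlonglongrightarrow> w - y"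
    by (intro tendsto_intros r(2) Tur)
  then have "(\<lambda>n. \<mu> *\<^sub>C u (r n)) \<longlonglongrightarrow> w - y"
    by (simp add: T_eq)
  then have "(\<lambda>n. inverse \<mu> *\<^sub>C (\<mu> *\<^sub>C u (r n))) \<longlonglongrightarrow> inverse \<mu> *\<^sub>C (w - y)"
    by (rule bounded_linear.tendsto[OF bounded_linear_scaleC])
  then have lim: "(\<lambda>n. u (r n)) \<longlonglongrightarrow> inverse \<mu> *\<^sub>C (w - y)"
    using nonzero by (simp add: scaleC_scaleC scaleC_one)
  then have "(\<lambda>n. T (u (r n))) \<longlonglongrightarrow> T (inverse \<mu> *\<^sub>C (w - y))"
    by (rule bounded_linear.tendsto[OF bounded_linear_T])
  then have "T (inverse \<mu> *\<^sub>C (w - y)) = y"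
    using Tur LIMSEQ_unique by blast
  then show thesis
    using that r(1) lim by blast
qed

lemma no_far_kernel_approximation:
  fixes u :: "nat \<Rightarrow> 'a"
  assumes "\<And>n. norm (u n) \<le> M" and "(\<lambda>n. T (u n)) \<longlonglongrightarrow> 0"
    and far: "\<And>n v. T v = 0 \<Longrightarrow> 1 \<le> norm (u n - v)"
  shows False
proof -
  obtain r u0 where r: "(\<lambda>n. u (r n)) \<longlonglongrightarrow> u0" and "T u0 = 0"
    using bounded_preimage_subseq_limit assms(1,2) by metis
  then have "1 \<le> norm (u (r n) - u0)" for n
    using far by blast
  moreover have "\<forall>\<^sub>F n in sequentially. dist (u (r n)) u0 < 1"
    using tendstoD[OF r zero_less_one] .
  ultimately show False
    by (simp add: dist_norm eventually_sequentially) (meson not_le order_refl)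
qed

lemma kernel_distance_bound: "\<exists>c>0. \<forall>x. c * infdist x {x. T x = 0} \<le> norm (T x)"
proof -
  define N where "N = {x. T x = 0}"
  have N: "csubspace N"
    unfolding N_def by (rule csubspace_kernel[OF clinear_T])
  have "\<exists>c>0. \<forall>x. c * infdist x N \<le> norm (T x)"
  proof (rule ccontr)
    assume "\<not> ?thesis"
    then have "\<forall>c>0. \<exists>x. \<not> c * infdist x N \<le> norm (T x)"
      by blast
    then have "\<forall>n. \<exists>x. \<not> inverse (real (Suc n)) * infdist x N \<le> norm (T x)"
      by simp
    then obtain x where "\<forall>n. \<not> inverse (real (Suc n)) * infdist (x n) N \<le> norm (T (x n))"
      by (metis choice)
    then have x: "norm (T (x n)) < inverse (real (Suc n)) * infdist (x n) N" for n
      by (simp add: not_le)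
    have d: "0 < infdist (x n) N" for n
      using le_less_trans[OF norm_ge_zero x[of n]] by (simp add: zero_less_mult_iff)
    have "\<forall>n. \<exists>v. norm v < 2 \<and> (\<forall>w\<in>N. 1 \<le> norm (v - w)) \<and> x n - infdist (x n) N *\<^sub>R v \<in> N"
      using csubspace_infdist_representative[OF N d] by blast
    then obtain u where u: "\<forall>n. norm (u n) < 2 \<and> (\<forall>w\<in>N. 1 \<le> norm (u n - w))
        \<and> x n - infdist (x n) N *\<^sub>R u n \<in> N"
      by (metis choice)
    then have "T (x n) = infdist (x n) N *\<^sub>R T (u n)" for n
      using clinear_imp_linear[OF clinear_T] unfolding N_def by (simp add: linear_diff linear_scale)
    then have "\<forall>n. norm (T (u n)) \<le> inverse (real (Suc n))"
      using x d by (simp add: mult.commute less_imp_le)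
    then have "(\<lambda>n. T (u n)) \<longlonglongrightarrow> 0"
      by (intro Lim_null_comparison[OF always_eventually LIMSEQ_inverse_real_of_nat])
    moreover have "norm (u n) \<le> 2" for n
      using u less_imp_le by blast
    ultimately show False
      using no_far_kernel_approximation u unfolding N_def by blast
  qed
  then show ?thesis
    unfolding N_def .
qed

lemma preimage_norm_bound:
  obtains c where "c > 0" "\<And>y. y \<in> range T \<Longrightarrow> \<exists>x. T x = y \<and> norm x \<le> norm y / c + 1"
proof -
  define N where "N = {x. T x = 0}"
  obtain c where c: "c > 0" "\<And>x. c * infdist x N \<le> norm (T x)"
    using kernel_distance_bound unfolding N_def by blast
  have "\<exists>x. T x = y \<and> norm x \<le> norm y / c + 1" if "y \<in> range T" for y
  proof -
    obtain x where x: "T x = y"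
      using \<open>y \<in> range T\<close> by blast
    have "0 \<in> N"
      unfolding N_def using clinear_zero[OF clinear_T] by simp
    then obtain z where z: "z \<in> N" "dist x z < infdist x N + 1"
      using infdist_lessE[of N x "infdist x N + 1"] by auto
    have "T (x - z) = y"
      using z(1) x clinear_diff[OF clinear_T] unfolding N_def by simp
    moreover have "c * infdist x N \<le> norm y"
      using c(2)[of x] x by simp
    then have "infdist x N \<le> norm y / c"
      using c(1) by (simp add: field_simps mult.commute)
    then have "norm (x - z) \<le> norm y / c + 1"
      using z(2) by (simp add: dist_norm)
    ultimately show ?thesis
      by blast
  qed
  then show thesis
    using that c(1) by blast
qed

lemma closed_range_T: "closed (range T)"
  unfolding closed_sequential_limits
proof (intro allI impI, elim conjE)
  fix s y
  assume s: "\<forall>n. s n \<in> range T" "s \<longlonglongrightarrow> y"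
  obtain c where c: "c > 0" "\<And>y. y \<in> range T \<Longrightarrow> \<exists>x. T x = y \<and> norm x \<le> norm y / c + 1"
    using preimage_norm_bound by blast
  obtain bound where bound: "\<And>n. norm (s n) \<le> bound"
    using s(2) convergent_imp_Bseq[of s] BseqE unfolding convergent_def by blast
  have "\<forall>n. \<exists>x. T x = s n \<and> norm x \<le> norm (s n) / c + 1"
    using s(1) c(2) by blast
  then obtain u where u: "\<And>n. T (u n) = s n" "\<And>n. norm (u n) \<le> norm (s n) / c + 1"
    by (metis choice)
  have "norm (u n) \<le> bound / c + 1" for n
    using u(2)[of n] divide_right_mono[OF bound[of n], of c] c(1) by linarith
  moreover have "(\<lambda>n. T (u n)) \<longlonglongrightarrow> y"
    using s(2) u(1) by simp
  ultimately obtain r u0 where "T u0 = y"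
    using bounded_preimage_subseq_limit by metis
  then show "y \<in> range T"
    by blast
qed

lemma no_strict_ascending_chain:
  assumes sub: "\<And>n. csubspace (M n)" and closed: "\<And>n. closed (M n)"
    and strict: "\<And>n. M n \<subset> M (Suc n)" and maps: "\<And>n x. x \<in> M (Suc n) \<Longrightarrow> T x \<in> M n"
  shows False
proof -
  have mono: "M m \<subseteq> M n" if "m \<le> n" for m n
    using lift_Suc_mono_le[of M, OF _ that] strict by blast
  have "\<forall>n. \<exists>v. v \<in> M (Suc n) \<and> norm v = 1 \<and> (\<forall>z\<in>M n. 1/2 \<le> norm (v - z))"
    using riesz_lemma[OF sub closed sub strict] by metis
  then obtain y where y: "\<And>n. y n \<in> M (Suc n)" "\<And>n. norm (y n) = 1"
    "\<And>n. \<forall>z\<in>M n. 1/2 \<le> norm (y n - z)"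
    by (metis choice)
  have separated: "cmod \<mu> / 2 \<le> norm (C (y n) - C (y m))" if "m < n" for m n
  proof (rule C_diff_lower_bound[OF sub])
    show "y m \<in> M n" "T (y m) \<in> M n"
      using y(1)[of m] maps[where n=m] mono[of m n] mono[of "Suc m" n] that by auto
    show "T (y n) \<in> M n"
      using maps y(1) by blast
  qed (use y(3) in blast)
  obtain m n where "m \<noteq> n" "norm (C (y m) - C (y n)) < cmod \<mu> / 2"
    using C_image_not_separated[of y "cmod \<mu> / 2"] y(2) nonzero by auto
  then show False
    using separated[of m n] separated[of n m] by (metis linorder_neq_iff norm_minus_commute not_le)
qed

lemma no_strict_descending_chain:
  assumes sub: "\<And>n. csubspace (M n)" and closed: "\<And>n. closed (M n)"
    and strict: "\<And>n. M (Suc n) \<subset> M n" and maps: "\<And>n x. x \<in> M n \<Longrightarrow> T x \<in> M (Suc n)"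
  shows False
proof -
  have antimono: "M n \<subseteq> M m" if "m \<le> n" for m n
    using lift_Suc_antimono_le[of M, OF _ that] strict by blast
  have "\<forall>n. \<exists>v. v \<in> M n \<and> norm v = 1 \<and> (\<forall>z\<in>M (Suc n). 1/2 \<le> norm (v - z))"
    using riesz_lemma[OF sub closed sub strict] by metis
  then obtain y where y: "\<And>n. y n \<in> M n" "\<And>n. norm (y n) = 1"
    "\<And>n. \<forall>z\<in>M (Suc n). 1/2 \<le> norm (y n - z)"
    by (metis choice)
  have separated: "cmod \<mu> / 2 \<le> norm (C (y n) - C (y m))" if "n < m" for m n
  proof (rule C_diff_lower_bound[OF sub])
    show "y m \<in> M (Suc n)" "T (y m) \<in> M (Suc n)"
      using y(1)[of m] maps[where n=m] antimono[of "Suc n" m] antimono[of "Suc n" "Suc m"] that by auto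
    show "T (y n) \<in> M (Suc n)"
      using maps y(1) by blast
  qed (use y(3) in blast)
  obtain m n where "m \<noteq> n" "norm (C (y m) - C (y n)) < cmod \<mu> / 2"
    using C_image_not_separated[of y "cmod \<mu> / 2"] y(2) nonzero by auto
  then show False
    using separated[of m n] separated[of n m] by (metis linorder_neq_iff norm_minus_commute not_le)
qed

lemma inj_if_surj:
  assumes "surj T"
  shows "inj T"
proof (rule ccontr)
  assume "\<not> inj T"
  then obtain a b where "T a = T b" "a \<noteq> b"
    unfolding inj_def by blast
  then have x1: "T (a - b) = 0" "a - b \<noteq> 0"
    using clinear_diff[OF clinear_T] by auto
  define N where "N n = {x. (T ^^ n) x = 0}" for n
  define x where "x n = (inv T ^^ n) (a - b)" for n
  have Tx: "(T ^^ n) (x n) = a - b" for n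
  proof (induction n)
    case (Suc n)
    have "x (Suc n) = inv T (x n)"
      unfolding x_def by simp
    then have "(T ^^ Suc n) (x (Suc n)) = (T ^^ n) (T (inv T (x n)))"
      by (simp add: funpow_Suc_right del: funpow.simps)
    then show ?case
      using Suc assms by (simp add: surj_f_inv_f)
  qed (simp add: x_def)
  show False
  proof (rule no_strict_ascending_chain[of N])
    show "csubspace (N n)" for n
      unfolding N_def by (rule csubspace_kernel[OF clinear_T_pow])
    show "closed (N n)" for n
      unfolding N_def by (rule closed_Collect_eq[OF continuous_T_pow continuous_on_const])
    show "T y \<in> N n" if "y \<in> N (Suc n)" for n y
      using that unfolding N_def by (simp add: funpow_swap1)
    show "N n \<subset> N (Suc n)" for n
    proof
      show "N n \<subseteq> N (Suc n)"
        unfolding N_def using clinear_zero[OF clinear_T] by auto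
      have "x n \<in> N (Suc n) - N n"
        using Tx[of n] x1 unfolding N_def by simp
      then show "N n \<noteq> N (Suc n)"
        by blast
    qed
  qed
qed

lemma bounded_below_if_inj:
  assumes "inj T"
  obtains c where "c > 0" "\<And>x. c * norm x \<le> norm (T x)"
proof -
  have "{x. T x = 0} = {0}"
    using injD[OF assms] clinear_zero[OF clinear_T] by auto
  then show thesis
    using kernel_distance_bound that by (auto simp: dist_norm)
qed

lemma T_range_pow:
  assumes "y \<in> range (T ^^ n)"
  shows "T y \<in> range (T ^^ Suc n)"
proof -
  obtain w where "y = (T ^^ n) w"
    using assms by blast
  then have "T y = (T ^^ Suc n) w"
    by simp
  then show ?thesis
    by (simp only: rangeI)
qed

lemma range_T_pow_Suc_subset: "range (T ^^ Suc n) \<subseteq> range (T ^^ n)"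
  by (auto simp: funpow_Suc_right simp del: funpow.simps)

lemma closed_range_T_pow_if_inj:
  assumes "inj T"
  shows "closed (range (T ^^ n))"
proof -
  obtain c where c: "c > 0" "\<And>x. c * norm x \<le> norm (T x)"
    using bounded_below_if_inj[OF assms] by blast
  have "c ^ n * norm x \<le> norm ((T ^^ n) x)" for x
  proof (induction n)
    case (Suc n)
    have "c ^ Suc n * norm x \<le> c * norm ((T ^^ n) x)"
      using Suc c(1) by (simp add: mult_left_mono)
    also have "\<dots> \<le> norm ((T ^^ Suc n) x)"
      using c(2) by simp
    finally show ?case .
  qed simp
  then show ?thesis
    using c(1) complete_UNIV
    by (intro complete_imp_closed complete_isometric_image[of "c ^ n", OF _ subspace_UNIV bounded_linear_T_pow])
       auto
qed

text \<open>By injectivity, equality of the ranges at step \<open>n + 1\<close> would force equality at step \<open>n\<close>.\<close>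
lemma range_T_pow_strict_if_inj_not_surj:
  assumes inj: "inj T" and "\<not> surj T"
  shows "range (T ^^ Suc n) \<subset> range (T ^^ n)"
proof (induction n)
  case 0
  then show ?case
    using \<open>\<not> surj T\<close> by auto
next
  case (Suc n)
  have "range (T ^^ n) \<subseteq> range (T ^^ Suc n)" if "range (T ^^ Suc (Suc n)) = range (T ^^ Suc n)"
  proof
    fix v
    assume "v \<in> range (T ^^ n)"
    then have "T v \<in> range (T ^^ Suc (Suc n))"
      using that T_range_pow by simp
    then obtain w where "T v = T ((T ^^ Suc n) w)"
      by auto
    then show "v \<in> range (T ^^ Suc n)"
      using inj by (auto dest: injD)
  qed
  then show ?case
    using Suc.IH range_T_pow_Suc_subset[of "Suc n"] by blast
qed

lemma surj_if_inj:
  assumes "inj T"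
  shows "surj T"
proof (rule ccontr)
  assume "\<not> surj T"
  show False
  proof (rule no_strict_descending_chain[of "\<lambda>n. range (T ^^ n)"])
    show "csubspace (range (T ^^ n))" for n
      by (rule csubspace_range[OF clinear_T_pow])
  qed (use assms \<open>\<not> surj T\<close> closed_range_T_pow_if_inj range_T_pow_strict_if_inj_not_surj T_range_pow in auto)
qed

lemma bounded_inverse_if_bij:
  assumes inj: "inj T" and surj: "surj T"
  obtains S where "bounded_clinear S" "\<And>x. S (T x) = x" "\<And>y. T (S y) = y"
proof -
  obtain c where c: "c > 0" "\<And>x. c * norm x \<le> norm (T x)"
    using bounded_below_if_inj[OF inj] by blast
  define S where "S = inv T"
  have ST: "S (T x) = x" for x
    unfolding S_def using inj by simp
  have TS: "T (S y) = y" for y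
    unfolding S_def using surj by (simp add: surj_f_inv_f)
  have "clinear S"
    unfolding clinear_def
  proof (intro conjI allI)
    fix a b c
    show "S (a + b) = S a + S b"
      using ST[of "S a + S b"] by (simp add: clinear_add[OF clinear_T] TS)
    show "S (c *\<^sub>C a) = c *\<^sub>C S a"
      using ST[of "c *\<^sub>C S a"] by (simp add: clinear_scaleC[OF clinear_T] TS)
  qed
  moreover have "norm (S y) \<le> norm y * (1 / c)" for y
    using c(2)[of "S y"] c(1) by (simp add: TS field_simps mult.commute)
  ultimately have "bounded_clinear S"
    unfolding bounded_clinear_def by blast
  then show thesis
    using that ST TS by blast
qed

lemma bounded_inverse_if_inj:
  assumes "inj T"
  obtains S where "bounded_clinear S" "\<And>x. S (T x) = x" "\<And>y. T (S y) = y"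
  using bounded_inverse_if_bij[OF assms surj_if_inj[OF assms]] by blast

lemma bounded_inverse_if_dense_range:
  assumes "closure (range T) = UNIV"
  obtains S where "bounded_clinear S" "\<And>x. S (T x) = x" "\<And>y. T (S y) = y"
proof -
  have "surj T"
    using assms closed_range_T closure_closed by metis
  then show thesis
    using bounded_inverse_if_bij[OF inj_if_surj] that by blast
qed

end

text \<open>For \<open>l = 0\<close> the unit ball is compact, so \<open>T + id\<close> is compact as well and
  \<open>T = (T + id) - 1 id\<close>.\<close>
lemma compact_minus_scalar_if_compact_operator:
  fixes T :: "'a::chilbert \<Rightarrow> 'a"
  assumes T: "compact_operator T" and "compact (cball (0::'a) 1) \<or> l \<noteq> 0"
  obtains C \<mu> where "compact_minus_scalar C \<mu> (\<lambda>x. T x - l *\<^sub>C x)"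
proof (cases "l = 0")
  case True
  have "bounded_clinear (\<lambda>x. T x + x)"
    using T unfolding compact_operator_def by (blast intro: bounded_clinear_add_id)
  then have "compact_operator (\<lambda>x. T x + x)"
    using True assms(2) by (blast intro: compact_operator_if_compact_cball)
  then have "compact_minus_scalar (\<lambda>x. T x + x) 1 (\<lambda>x. T x - l *\<^sub>C x)"
    using True by unfold_locales (simp_all add: scaleC_one)
  then show thesis
    by (rule that)
next
  case False
  have "compact_minus_scalar T l (\<lambda>x. T x - l *\<^sub>C x)"
    using T False by unfold_locales simp_all
  then show thesis
    by (rule that)
qed

lemma not_in_op_spectrum_if_inj:
  fixes T :: "'a::chilbert \<Rightarrow> 'a"
  assumes "compact_operator T" and "compact (cball (0::'a) 1) \<or> l \<noteq> 0"
    and "inj (\<lambda>x. T x - l *\<^sub>C x)"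
  shows "l \<notin> op_spectrum T"
proof -
  obtain C \<mu> where "compact_minus_scalar C \<mu> (\<lambda>x. T x - l *\<^sub>C x)"
    using compact_minus_scalar_if_compact_operator[OF assms(1,2)] .
  then obtain S where "bounded_clinear S" "\<And>x. S (T x - l *\<^sub>C x) = x" "\<And>y. T (S y) - l *\<^sub>C S y = y"
    using compact_minus_scalar.bounded_inverse_if_inj[OF _ assms(3)] by blast
  then show ?thesis
    unfolding op_spectrum_def by blast
qed

lemma not_in_op_spectrum_if_dense_range:
  fixes T :: "'a::chilbert \<Rightarrow> 'a"
  assumes "compact_operator T" and "compact (cball (0::'a) 1) \<or> l \<noteq> 0"
    and "closure (range (\<lambda>x. T x - l *\<^sub>C x)) = UNIV"
  shows "l \<notin> op_spectrum T"
proof -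
  obtain C \<mu> where "compact_minus_scalar C \<mu> (\<lambda>x. T x - l *\<^sub>C x)"
    using compact_minus_scalar_if_compact_operator[OF assms(1,2)] .
  then obtain S where "bounded_clinear S" "\<And>x. S (T x - l *\<^sub>C x) = x" "\<And>y. T (S y) - l *\<^sub>C S y = y"
    using compact_minus_scalar.bounded_inverse_if_dense_range[OF _ assms(3)] by blast
  then show ?thesis
    unfolding op_spectrum_def by blast
qed

section \<open>Spectra of intertwined compact operators\<close>

lemma op_spectrum_subset_if_intertwined_dense:
  fixes K B V :: "'a::chilbert \<Rightarrow> 'a"
  assumes K: "compact_operator K" and B: "compact_operator B" and V: "clinear V"
    and dense: "closure (range V) = UNIV" and BV: "\<And>y. B (V y) = V (K y)"
  shows "op_spectrum B \<subseteq> op_spectrum K"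
proof
  fix l
  assume l_B: "l \<in> op_spectrum B"
  show "l \<in> op_spectrum K"
  proof (rule ccontr)
    assume "l \<notin> op_spectrum K"
    then obtain S where S: "bounded_clinear S" "\<And>x. S (K x - l *\<^sub>C x) = x"
      "\<And>y. K (S y) - l *\<^sub>C S y = y"
      unfolding op_spectrum_def by blast
    have "V y = B (V (S y)) - l *\<^sub>C V (S y)" for y
    proof -
      have "V y = V (K (S y) - l *\<^sub>C S y)"
        by (simp only: S(3))
      then show ?thesis
        by (simp add: clinear_diff[OF V] clinear_scaleC[OF V] BV)
    qed
    then have "range V \<subseteq> range (\<lambda>x. B x - l *\<^sub>C x)"
      by blast
    then have "closure (range (\<lambda>x. B x - l *\<^sub>C x)) = UNIV"
      using closure_mono dense by blast
    moreover have "compact (cball (0::'a) 1) \<or> l \<noteq> 0"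
      using compact_cball_if_compact_operator_left_invertible[OF K] S(1,2)
        linear_continuous_on[OF bounded_clinear_imp_bounded_linear] by force
    ultimately show False
      using not_in_op_spectrum_if_dense_range[OF B] l_B by blast
  qed
qed

lemma op_spectrum_subset_if_intertwined_inj:
  fixes K B V :: "'a::chilbert \<Rightarrow> 'a"
  assumes K: "compact_operator K" and B: "compact_operator B" and V: "clinear V"
    and "inj V" and BV: "\<And>y. B (V y) = V (K y)"
  shows "op_spectrum K \<subseteq> op_spectrum B"
proof
  fix l
  assume l_K: "l \<in> op_spectrum K"
  show "l \<in> op_spectrum B"
  proof (rule ccontr)
    assume "l \<notin> op_spectrum B"
    then obtain S where S: "bounded_clinear S" "\<And>x. S (B x - l *\<^sub>C x) = x"
      unfolding op_spectrum_def by blast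
    have "V (K x - l *\<^sub>C x) = B (V x) - l *\<^sub>C V x" for x
      by (simp add: clinear_diff[OF V] clinear_scaleC[OF V] BV)
    then have SV: "S (V (K x - l *\<^sub>C x)) = V x" for x
      using S(2) by simp
    have "inj (\<lambda>x. K x - l *\<^sub>C x)"
    proof (rule injI)
      fix a b
      assume "K a - l *\<^sub>C a = K b - l *\<^sub>C b"
      then have "V a = V b"
        using SV[of a] SV[of b] by simp
      then show "a = b"
        using injD[OF \<open>inj V\<close>] by blast
    qed
    moreover have "compact (cball (0::'a) 1) \<or> l \<noteq> 0"
      using compact_cball_if_compact_operator_left_invertible[OF B] S
        linear_continuous_on[OF bounded_clinear_imp_bounded_linear] by force
    ultimately show False
      using not_in_op_spectrum_if_inj[OF K] l_K by blast
  qed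
qed

lemma op_spectrum_eq_if_intertwined:
  fixes K B V :: "'a::chilbert \<Rightarrow> 'a"
  assumes "compact_operator K" and "compact_operator B" and "clinear V"
    and "inj V" and "closure (range V) = UNIV" and "\<And>y. B (V y) = V (K y)"
  shows "op_spectrum B = op_spectrum K"
  using op_spectrum_subset_if_intertwined_dense[of K B V] op_spectrum_subset_if_intertwined_inj[of K B V]
    assms by blast

lemma clinear_inv_into:
  assumes W: "clinear_on D W" and bij: "bij_betw W D UNIV"
  shows "clinear (inv_into D W)"
proof -
  have D: "csubspace D"
    using W unfolding clinear_on_def by blast
  have V_in: "inv_into D W y \<in> D" and WV: "W (inv_into D W y) = y" for y
    using bij by (auto simp: bij_betw_def inv_into_into f_inv_into_f)
  have VW: "inv_into D W (W x) = x" if "x \<in> D" for x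
    using bij that by (simp add: bij_betw_def)
  show ?thesis
    unfolding clinear_def
  proof (intro conjI allI)
    fix a b c
    have "W (inv_into D W a + inv_into D W b) = a + b"
      using W V_in WV unfolding clinear_on_def by metis
    then show "inv_into D W (a + b) = inv_into D W a + inv_into D W b"
      using VW[OF csubspace_add[OF D V_in[of a] V_in[of b]]] by simp
    have "W (c *\<^sub>C inv_into D W a) = c *\<^sub>C a"
      using W V_in WV unfolding clinear_on_def by metis
    then show "inv_into D W (c *\<^sub>C a) = c *\<^sub>C inv_into D W a"
      using VW[OF csubspace_scaleC[OF D V_in[of a]], of c] by simp
  qed
qed

lemma inv_into_intertwines_if_op_graph_subset:
  assumes bij: "bij_betw W D UNIV"
    and graph: "op_graph D (\<lambda>x. inv_into D W (K (W x))) \<subseteq> op_graph UNIV B"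
  shows "B (inv_into D W y) = inv_into D W (K y)"
proof -
  let ?V = "inv_into D W"
  have "?V y \<in> D"
    using bij by (simp add: bij_betw_def inv_into_into)
  then have "(?V y, ?V (K (W (?V y)))) \<in> op_graph UNIV B"
    using graph unfolding op_graph_def by blast
  moreover have "W (?V y) = y"
    using bij by (simp add: bij_betw_def f_inv_into_f)
  ultimately show ?thesis
    unfolding op_graph_def by simp
qed

theorem mainTheorem12:
  fixes K B W :: "'a::chilbert \<Rightarrow> 'a" and D :: "'a set"
  assumes K_compact: "compact_operator K"
    and W_linear: "clinear_on D W"
    and W_closed: "closed (op_graph D W)"
    and W_bij: "bij_betw W D UNIV"
    and D_dense: "closure D = UNIV"
    and B_bounded: "bounded_clinear B"
    and B_closure: "closure (op_graph D (\<lambda>x. inv_into D W (K (W x)))) = op_graph UNIV B"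
    and B_compact: "compact_operator B"
  shows "op_spectrum B = op_spectrum K"
proof (rule op_spectrum_eq_if_intertwined[OF K_compact B_compact])
  show "clinear (inv_into D W)"
    by (rule clinear_inv_into[OF W_linear W_bij])
  have "bij_betw (inv_into D W) UNIV D"
    by (rule bij_betw_inv_into[OF W_bij])
  then show "inj (inv_into D W)" and "closure (range (inv_into D W)) = UNIV"
    using D_dense by (simp_all add: bij_betw_def)
  show "B (inv_into D W y) = inv_into D W (K y)" for y
    using inv_into_intertwines_if_op_graph_subset[OF W_bij] B_closure closure_subset by metis
qed

end
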